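(* Let $K$ be a semifield. Let $P$ be a polygon with vertex set $V$ and a non-empty dissection $D$, and let $d=\{\zeta,\eta\}\in D$ be such that $D = \{d\}\cup D_2$ where $D_2$ is a dissection of the subpolygon with vertex set $V_2 = \{\varepsilon \in V : \eta \le \varepsilon \le \zeta\}$. Let $U_1 = \{\varepsilon\in V : \zeta<\varepsilon<\eta\}$, $U_2 = \{\varepsilon\in V : \eta<\varepsilon<\zeta\}$, and let $\alpha \in U_1$, $\beta \in U_2$, and $f : \operatorname{diag}(P) \to K$ any map. (i) The rule $R(\alpha,\zeta,\pi_3,\dots,\pi_p) = (\eta,\zeta,\pi_3,\dots,\pi_p)$ defines a bijection from the set of $\pi\in\mathcal{T}_{P,D}(\alpha,\beta)$ with $\pi_2=\zeta$ and $\pi_3\neq\eta$ onto the set of $\rho\in\mathcal{T}_{P,D}(\eta,\beta)$ with $\rho_2=\zeta$, and it satisfies $\frac{f(\alpha,\zeta)}{f(\eta,\zeta)} f(R(\pi)) = f(\pi)$. (ii) The rule $S(\alpha,\zeta,\eta,\pi_4,\dots,\pi_p) = (\eta,\pi_4,\dots,\pi_p)$ defines a bijection from the set of $\pi\in\mathcal{T}_{P,D}(\alpha,\beta)$ with $\pi_2=\zeta$ and $\pi_3=\eta$ onto the set of $\sigma\in\mathcal{T}_{P,D}(\eta,\beta)$ with $\sigma_2\neq\zeta$, and it satisfies $\frac{f(\alpha,\zeta)}{f(\zeta,\eta)} f(S(\pi)) = f(\pi)$.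
   Context: A semifield is a set $K$ with binary operations $+,\cdot$ such that $+$ is associative and commutative, $(K,\cdot)$ is a commutative group, and $\cdot$ distributes over $+$; $x/y := xy^{-1}$. A polygon is a finite set $V$ of at least three vertices with a cyclic order, pictured as a convex polygon in the plane with vertices anticlockwise. "$a\le\varepsilon\le b$" means $\varepsilon$ lies on the cyclic interval from $a$ to $b$ in the positive direction, endpoints included; "$<$" excludes the corresponding endpoint. A subpolygon is a subset of at least three vertices with induced cyclic order. A diagonal is a two-element subset of $V$ (edges included); $\operatorname{diag}(P)$ is the set of diagonals; non-edges are internal. Diagonals cross if they consist of four distinct vertices $\alpha,\beta,\gamma,\delta$ appearing cyclically as $\alpha,\gamma,\beta,\delta$ or $\alpha,\delta,\beta,\gamma$. A dissection is a set of pairwise non-crossing internal diagonals. For vertices $\pi_1\neq\pi_p$, a $T$-path from $\pi_1$ to $\pi_p$ w.r.t. $D$ is a tuple $(\pi_1,\dots,\pi_p)$ of vertices with: (i) $\{\pi_1,\pi_2\},\dots,\{\pi_{p-1},\pi_p\}$ pairwise different diagonals; (ii) no $\{\pi_i,\pi_{i+1}\}$ crosses a diagonal of $D$; (iii) each $\{\pi_{2j},\pi_{2j+1}\}$ lies in $D$, and these cross the segment $\{\pi_1,\pi_p\}$ at pairwise different points progressing monotonically from $\pi_1$ to $\pi_p$. $\mathcal{T}_{P,D}(\alpha,\beta)$ is the set of such paths from $\alpha$ to $\beta$. With $f(\alpha,\beta):=f(\{\alpha,\beta\})$, $f(\pi) := \prod_{i\text{ odd}} f(\pi_i,\pi_{i+1})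 / \prod_{j\text{ even}} f(\pi_j,\pi_{j+1})$. *)

theory Defs
  imports Main
begin

class semifield_mult = comm_monoid_mult + ab_semigroup_add + inverse +
  assumes sf_left_inverse: "inverse a * a = 1"
  assumes sf_divide: "a / b = a * inverse b"
  assumes sf_distrib: "(a + b) * c = a * c + b * c"

text \<open>A polygon is a finite vertex set V (at least 3 vertices) whose cyclic order is given
by an enumeration pos : V -> {0..<card V} (anticlockwise = increasing pos, modulo card V).\<close>

definition polygon :: "'v set \<Rightarrow> ('v \<Rightarrow> nat) \<Rightarrow> bool" where
  "polygon V pos \<longleftrightarrow> finite V \<and> card V \<ge> 3 \<and> bij_betw pos V {..<card V}"

text \<open>btw V pos a x b: x lies strictly inside the cyclic interval from a to b in the positive
direction (a < x < b in the notation of the paper).\<close>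

definition btw :: "'v set \<Rightarrow> ('v \<Rightarrow> nat) \<Rightarrow> 'v \<Rightarrow> 'v \<Rightarrow> 'v \<Rightarrow> bool" where
  "btw V pos a x b \<longleftrightarrow>
     (let n = card V; k = (\<lambda>y. (pos y + n - pos a) mod n) in 0 < k x \<and> k x < k b)"

text \<open>a \<le> x \<le> b (closed cyclic interval, for a \<noteq> b).\<close>
definition cbtw :: "'v set \<Rightarrow> ('v \<Rightarrow> nat) \<Rightarrow> 'v \<Rightarrow> 'v \<Rightarrow> 'v \<Rightarrow> bool" where
  "cbtw V pos a x b \<longleftrightarrow> x = a \<or> x = b \<or> btw V pos a x b"

definition diag :: "'v set \<Rightarrow> 'v set set" where
  "diag W = {e. \<exists>a b. a \<in> W \<and> b \<in> W \<and> a \<noteq> b \<and> e = {a, b}}"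

text \<open>Edges of the (sub)polygon with vertex set W \<subseteq> V, with the cyclic order induced
from V: pairs of cyclically consecutive vertices of W.\<close>
definition is_edge :: "'v set \<Rightarrow> ('v \<Rightarrow> nat) \<Rightarrow> 'v set \<Rightarrow> 'v set \<Rightarrow> bool" where
  "is_edge V pos W e \<longleftrightarrow>
     (\<exists>a b. e = {a, b} \<and> a \<in> W \<and> b \<in> W \<and> a \<noteq> b \<and> (\<forall>w\<in>W. \<not> btw V pos a w b))"

definition crosses :: "'v set \<Rightarrow> ('v \<Rightarrow> nat) \<Rightarrow> 'v set \<Rightarrow> 'v set \<Rightarrow> bool" where
  "crosses V pos e1 e2 \<longleftrightarrow>
     (\<exists>a b c d. e1 = {a, b} \<and> e2 = {c, d} \<and> distinct [a, b, c, d] \<and>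
        btw V pos a c b \<and> btw V pos b d a)"

definition dissection :: "'v set \<Rightarrow> ('v \<Rightarrow> nat) \<Rightarrow> 'v set \<Rightarrow> 'v set set \<Rightarrow> bool" where
  "dissection V pos W D \<longleftrightarrow>
     D \<subseteq> diag W \<and> (\<forall>e\<in>D. \<not> is_edge V pos W e) \<and>
     (\<forall>e1\<in>D. \<forall>e2\<in>D. \<not> crosses V pos e1 e2)"

text \<open>Order of crossing points along the segment from x to y: for (non-crossing) diagonals
e, e' both crossing {x,y}, e crosses the segment strictly before e' (as seen from x) iff
e \<noteq> e' and e' lies entirely on the y-side of e.\<close>
definition cross_before :: "'v set \<Rightarrow> ('v \<Rightarrow> nat) \<Rightarrow> 'v \<Rightarrow> 'v \<Rightarrow> 'v set \<Rightarrow> 'v set \<Rightarrow> bool" where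
  "cross_before V pos x y e e' \<longleftrightarrow> e \<noteq> e' \<and>
     (\<exists>a b a' b'. e = {a, b} \<and> e' = {a', b'} \<and>
        btw V pos x a y \<and> btw V pos y b x \<and> btw V pos x a' y \<and> btw V pos y b' x \<and>
        (a' = a \<or> btw V pos a a' y) \<and> (b' = b \<or> btw V pos y b' b))"

text \<open>T-paths, as lists (0-indexed: the paper's \<pi>_i is xs ! (i-1); the paper's even steps
{\<pi>_2j, \<pi>_2j+1} are the steps with odd 0-based index).\<close>

definition step :: "'v list \<Rightarrow> nat \<Rightarrow> 'v set" where
  "step xs i = {xs ! i, xs ! Suc i}"

definition Tpath :: "'v set \<Rightarrow> ('v \<Rightarrow> nat) \<Rightarrow> 'v set set \<Rightarrow> 'v list \<Rightarrow> bool" where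
  "Tpath V pos D xs \<longleftrightarrow>
     length xs \<ge> 2 \<and> set xs \<subseteq> V \<and> hd xs \<noteq> last xs \<and>
     (\<forall>i < length xs - 1. step xs i \<in> diag V) \<and>
     inj_on (step xs) {..<length xs - 1} \<and>
     (\<forall>i < length xs - 1. \<forall>e\<in>D. \<not> crosses V pos (step xs i) e) \<and>
     (\<forall>i < length xs - 1. odd i \<longrightarrow>
        step xs i \<in> D \<and> crosses V pos (step xs i) {hd xs, last xs}) \<and>
     (\<forall>i j. odd i \<and> odd j \<and> i < j \<and> j < length xs - 1 \<longrightarrow>
        cross_before V pos (hd xs) (last xs) (step xs i) (step xs j))"

definition Tpaths :: "'v set \<Rightarrow> ('v \<Rightarrow> nat) \<Rightarrow> 'v set set \<Rightarrow> 'v \<Rightarrow> 'v \<Rightarrow> 'v list set" where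
  "Tpaths V pos D a b = {xs. Tpath V pos D xs \<and> hd xs = a \<and> last xs = b}"

text \<open>Weight f(\<pi>): product over the paper's odd steps divided by product over even steps.\<close>
definition Tweight :: "('v set \<Rightarrow> 'a::semifield_mult) \<Rightarrow> 'v list \<Rightarrow> 'a" where
  "Tweight f xs =
     (\<Prod>i \<in> {i. i < length xs - 1 \<and> even i}. f (step xs i)) /
     (\<Prod>i \<in> {i. i < length xs - 1 \<and> odd i}. f (step xs i))"

end

theory Submission
  imports Defs
begin

text \<open>
  Every diagonal of \<open>D\<close> other than \<open>d = {\<zeta>, \<eta>}\<close> has both endpoints in \<open>V2\<close>, and no
  vertex of \<open>V2\<close> except \<open>\<eta>\<close> lies on the arc from \<open>\<alpha>\<close> to \<open>\<eta>\<close>. Hence, for diagonals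
  of \<open>D\<close> avoiding \<open>\<eta>\<close>, crossing \<open>{\<alpha>, \<beta>}\<close> and crossing \<open>{\<eta>, \<beta>}\<close> are the same,
  and the crossing points come in the same order. The crossed diagonals of a T-path from
  \<open>\<alpha>\<close> to \<open>\<beta>\<close> move monotonically towards \<open>\<beta>\<close>, so once one of them misses \<open>\<eta>\<close> all
  later ones do; on a T-path from \<open>\<eta>\<close> none of them contains \<open>\<eta>\<close>. Consequently
  (i) replacing the start \<open>\<alpha>\<close> by \<open>\<eta>\<close> only turns the first step \<open>{\<alpha>, \<zeta>}\<close> into \<open>d\<close>,
  which crosses no diagonal of \<open>D\<close>, and (ii) the two steps \<open>{\<alpha>, \<zeta>}\<close> and \<open>d\<close> can be
  removed from the front of a T-path and put back, since \<open>{\<alpha>, \<zeta>}\<close> crosses no diagonal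
  of \<open>D\<close> and \<open>d\<close> is crossed before every diagonal that crosses \<open>{\<eta>, \<beta>}\<close>. The
  weights change only in the factors of the modified steps.
\<close>

section \<open>Cyclic order in coordinates\<close>

definition cyclic :: "nat \<Rightarrow> nat \<Rightarrow> nat \<Rightarrow> bool" where
  "cyclic p q s \<longleftrightarrow> (p < q \<and> q < s) \<or> (q < s \<and> s < p) \<or> (s < p \<and> p < q)"

text \<open>The offset of \<open>y\<close> from \<open>c\<close>, counted anticlockwise; \<open>btw_def\<close> compares these
  offsets taken from its first argument.\<close>
definition rot :: "'v set \<Rightarrow> ('v \<Rightarrow> nat) \<Rightarrow> 'v \<Rightarrow> 'v \<Rightarrow> nat" where
  "rot V pos c y = (pos y + card V - pos c) mod card V"

lemma mod_rotate:
  assumes "(p::nat) < n" "q < n"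
  shows "(p + n - q) mod n = (if q \<le> p then p - q else p + n - q)"
proof (cases "q \<le> p")
  case True
  then have "p + n - q = (p - q) + n" by simp
  then have "(p + n - q) mod n = (p - q) mod n" by simp
  then show ?thesis using True assms by simp
qed (use assms in simp)

lemma cyclic_rotate:
  assumes "p < n" "q < n" "s < n" "c < n"
  shows "cyclic ((p + n - c) mod n) ((q + n - c) mod n) ((s + n - c) mod n) \<longleftrightarrow> cyclic p q s"
  unfolding mod_rotate[OF assms(1,4)] mod_rotate[OF assms(2,4)] mod_rotate[OF assms(3,4)] cyclic_def
  using assms by (cases "c \<le> p"; cases "c \<le> q"; cases "c \<le> s"; simp; linarith)

lemma cyclic_iff_less: "p < s \<Longrightarrow> cyclic p q s \<longleftrightarrow> p < q \<and> q < s"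
  and cyclic_iff_greater: "s < p \<Longrightarrow> cyclic p q s \<longleftrightarrow> q < s \<or> p < q"
  unfolding cyclic_def by auto

lemma cyclic_shift:
  assumes "a \<le> h" "x < a \<or> h < x" "y < a \<or> h < y"
  shows "cyclic x a y \<longleftrightarrow> cyclic x h y" "cyclic a x y \<longleftrightarrow> cyclic h x y"
    "cyclic x y a \<longleftrightarrow> cyclic x y h"
  using assms unfolding cyclic_def by auto

context
  fixes V :: "'v set" and pos :: "'v \<Rightarrow> nat"
  assumes polygon: "polygon V pos"
begin

lemma pos_lt_card: "y \<in> V \<Longrightarrow> pos y < card V"
  using polygon unfolding polygon_def by (auto dest: bij_betw_apply)

lemma rot_eq_iff: "c \<in> V \<Longrightarrow> x \<in> V \<Longrightarrow> y \<in> V \<Longrightarrow> rot V pos c x = rot V pos c y \<longleftrightarrow> x = y"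
proof -
  assume V: "c \<in> V" "x \<in> V" "y \<in> V"
  have "rot V pos c x = rot V pos c y \<longleftrightarrow> pos x = pos y"
    using V pos_lt_card[of c] pos_lt_card[of x] pos_lt_card[of y]
    by (auto simp: rot_def mod_rotate split: if_splits)
  moreover have "inj_on pos V" using polygon unfolding polygon_def bij_betw_def by blast
  ultimately show ?thesis using V by (simp add: inj_on_eq_iff)
qed

lemma btw_iff_cyclic:
  assumes "c \<in> V" "a \<in> V" "x \<in> V" "b \<in> V"
  shows "btw V pos a x b \<longleftrightarrow> cyclic (rot V pos c a) (rot V pos c x) (rot V pos c b)"
proof -
  have "btw V pos a x b \<longleftrightarrow> cyclic (pos a) (pos x) (pos b)"
    using assms pos_lt_card[of a] pos_lt_card[of x] pos_lt_card[of b]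
    by (auto simp: btw_def Let_def mod_rotate cyclic_def split: if_splits)
  then show ?thesis
    using assms pos_lt_card cyclic_rotate unfolding rot_def by simp
qed

end

lemma doubleton_in_diag_iff: "{a, b} \<in> diag V \<longleftrightarrow> a \<in> V \<and> b \<in> V \<and> a \<noteq> b"
  by (auto simp: diag_def doubleton_eq_iff)

lemma crosses_iff:
  "crosses V pos {p, q} {c, d} \<longleftrightarrow> distinct [p, q, c, d] \<and>
     (btw V pos p c q \<and> btw V pos q d p \<or> btw V pos p d q \<and> btw V pos q c p)"
  unfolding crosses_def doubleton_eq_iff by auto

lemma crosses_disjoint: "crosses V pos e e' \<Longrightarrow> e \<inter> e' = {}"
  unfolding crosses_def by auto

section \<open>Weights\<close>

lemma sf_inverse_mult: "inverse (a * b) = inverse a * inverse (b::'a::semifield_mult)"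
proof -
  have "(a * b) * (inverse a * inverse b) = (inverse a * a) * (inverse b * b)"
    by (simp add: ac_simps)
  then have "(a * b) * (inverse a * inverse b) = 1" by (simp add: sf_left_inverse)
  then have "inverse (a * b) = (inverse (a * b) * (a * b)) * (inverse a * inverse b)"
    by (simp add: mult.assoc)
  then show ?thesis by (simp add: sf_left_inverse)
qed

lemma sf_divide_mult_eq: "c * x = a * (y::'a::semifield_mult) \<Longrightarrow> a / c * y = x"
proof -
  assume h: "c * x = a * y"
  have "a / c * y = inverse c * (a * y)" by (simp add: sf_divide ac_simps)
  also have "\<dots> = x" by (simp add: h[symmetric] mult.assoc[symmetric] sf_left_inverse)
  finally show ?thesis .
qed

lemma sf_mult_divide_mult_cancel:
  "c * (a * x / (c * y)) = a * (x / (y::'a::semifield_mult))"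
proof -
  have "c * (a * x / (c * y)) = (inverse c * c) * (a * (x * inverse y))"
    by (simp add: sf_divide sf_inverse_mult ac_simps)
  then show ?thesis by (simp add: sf_left_inverse sf_divide)
qed

lemma step_Cons_Suc [simp]: "step (x # xs) (Suc i) = step xs i"
  by (simp add: step_def)

lemma Tweight_conv_lessThan:
  "Tweight f xs = (\<Prod>i<length xs - 1. if even i then f (step xs i) else 1) /
                  (\<Prod>i<length xs - 1. if odd i then f (step xs i) else 1)"
  unfolding Tweight_def by (simp add: prod.inter_filter[symmetric])

lemma Tweight_Cons_tl:
  fixes f :: "'v set \<Rightarrow> 'a::semifield_mult"
  assumes "length xs \<ge> 2" "hd xs = a" "xs ! 1 = b"
  shows "f {a, b} / f {x, b} * Tweight f (x # tl xs) = Tweight f xs"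
proof -
  obtain ys where xs: "xs = a # b # ys"
    using assms by (cases xs; cases "tl xs") auto
  have "f {x, b} * Tweight f xs = f {a, b} * Tweight f (x # tl xs)"
    unfolding xs Tweight_conv_lessThan
    by (simp add: prod.lessThan_Suc_shift step_def sf_divide ac_simps
        cong: if_cong del: prod.lessThan_Suc)
  then show ?thesis by (rule sf_divide_mult_eq)
qed

lemma Tweight_drop2:
  fixes f :: "'v set \<Rightarrow> 'a::semifield_mult"
  assumes "length xs \<ge> 3" "hd xs = a" "xs ! 1 = b" "xs ! 2 = c"
  shows "f {a, b} / f {b, c} * Tweight f (c # drop 3 xs) = Tweight f xs"
proof -
  obtain ys where xs: "xs = a # b # c # ys"
    using assms by (cases xs; cases "tl xs"; cases "tl (tl xs)") (auto simp: numeral_2_eq_2)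
  have "f {b, c} * Tweight f xs = f {a, b} * Tweight f (c # drop 3 xs)"
    unfolding xs Tweight_conv_lessThan
    by (simp add: prod.lessThan_Suc_shift sf_mult_divide_mult_cancel step_def numeral_3_eq_3
        cong: if_cong del: prod.lessThan_Suc)
  then show ?thesis by (rule sf_divide_mult_eq)
qed

section \<open>Local changes of T-paths\<close>

lemma nth_in_odd_step:
  assumes "1 \<le> k" "k < length xs"
  shows "xs ! k = last xs \<or> (\<exists>i<length xs - 1. odd i \<and> xs ! k \<in> step xs i)"
proof (cases "k = length xs - 1")
  case True
  moreover have "xs \<noteq> []" using assms by auto
  ultimately show ?thesis by (simp add: last_conv_nth)
next
  case False
  define i where "i = (if odd k then k else k - 1)"
  have "odd i" "i < length xs - 1" "xs ! k \<in> step xs i"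
    using False assms by (auto simp: i_def step_def)
  then show ?thesis by blast
qed

lemma TpathD:
  assumes "Tpath V pos D xs"
  shows "length xs \<ge> 2" "set xs \<subseteq> V" "hd xs \<noteq> last xs"
    "\<And>i. i < length xs - 1 \<Longrightarrow> step xs i \<in> diag V"
    "inj_on (step xs) {..<length xs - 1}"
    "\<And>i e. i < length xs - 1 \<Longrightarrow> e \<in> D \<Longrightarrow> \<not> crosses V pos (step xs i) e"
    "\<And>i. odd i \<Longrightarrow> i < length xs - 1 \<Longrightarrow> step xs i \<in> D"
    "\<And>i. odd i \<Longrightarrow> i < length xs - 1 \<Longrightarrow> crosses V pos (step xs i) {hd xs, last xs}"
    "\<And>i j. odd i \<Longrightarrow> odd j \<Longrightarrow> i < j \<Longrightarrow> j < length xs - 1 \<Longrightarrow>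
        cross_before V pos (hd xs) (last xs) (step xs i) (step xs j)"
  using assms unfolding Tpath_def by auto

lemma TpathI:
  assumes "length xs \<ge> 2" "set xs \<subseteq> V" "hd xs \<noteq> last xs"
    "\<And>i. i < length xs - 1 \<Longrightarrow> step xs i \<in> diag V"
    "inj_on (step xs) {..<length xs - 1}"
    "\<And>i e. i < length xs - 1 \<Longrightarrow> e \<in> D \<Longrightarrow> \<not> crosses V pos (step xs i) e"
    "\<And>i. odd i \<Longrightarrow> i < length xs - 1 \<Longrightarrow> step xs i \<in> D"
    "\<And>i. odd i \<Longrightarrow> i < length xs - 1 \<Longrightarrow> crosses V pos (step xs i) {hd xs, last xs}"
    "\<And>i j. odd i \<Longrightarrow> odd j \<Longrightarrow> i < j \<Longrightarrow> j < length xs - 1 \<Longrightarrow>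
        cross_before V pos (hd xs) (last xs) (step xs i) (step xs j)"
  shows "Tpath V pos D xs"
  using assms unfolding Tpath_def by blast

lemma Tpaths_Cons_conv:
  "x # xs \<in> Tpaths V pos D a b \<longleftrightarrow> Tpath V pos D (x # xs) \<and> x = a \<and> xs \<noteq> [] \<and> last xs = b"
  unfolding Tpaths_def using TpathD(1)[of V pos D "x # xs"] by auto

lemma Tpaths_elemE:
  assumes "\<pi> \<in> Tpaths V pos D a b"
  obtains \<pi>' where "\<pi> = a # \<pi>'"
  using assms TpathD(1)[of V pos D \<pi>] unfolding Tpaths_def by (cases \<pi>) auto

lemma list_conv_nth_012: "length xs \<ge> 3 \<Longrightarrow> xs = hd xs # xs ! 1 # xs ! 2 # drop 3 xs"
  by (cases xs; cases "tl xs"; cases "tl (tl xs)") (auto simp: numeral_3_eq_3)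

lemma step_Cons_tl: "xs \<noteq> [] \<Longrightarrow> step (x # tl xs) i = (if i = 0 then {x, xs ! 1} else step xs i)"
  by (cases xs; cases i) (auto simp: step_def)

lemma Tpath_Cons_tl:
  assumes T: "Tpath V pos D xs"
    and x: "x \<noteq> last xs" "{x, xs ! 1} \<in> diag V" "\<forall>e\<in>D. \<not> crosses V pos {x, xs ! 1} e"
    and new: "\<And>i. 0 < i \<Longrightarrow> i < length xs - 1 \<Longrightarrow> step xs i \<noteq> {x, xs ! 1}"
    and cr: "\<And>i. odd i \<Longrightarrow> i < length xs - 1 \<Longrightarrow> crosses V pos (step xs i) {x, last xs}"
    and cb: "\<And>i j. odd i \<Longrightarrow> odd j \<Longrightarrow> i < j \<Longrightarrow> j < length xs - 1 \<Longrightarrow>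
               cross_before V pos x (last xs) (step xs i) (step xs j)"
  shows "Tpath V pos D (x # tl xs)"
proof -
  have ne: "xs \<noteq> []" using TpathD(1)[OF T] by auto
  have len: "length (x # tl xs) = length xs" using ne by simp
  have last: "last (x # tl xs) = last xs" using TpathD(1)[OF T] by (cases xs) auto
  note st = step_Cons_tl[OF ne]
  show ?thesis
  proof (rule TpathI, unfold len last list.sel(1))
    show "set (x # tl xs) \<subseteq> V"
      using TpathD(2)[OF T] x(2) by (cases xs) (auto simp: doubleton_in_diag_iff)
    show "inj_on (step (x # tl xs)) {..<length xs - 1}"
      using TpathD(5)[OF T] new unfolding inj_on_def st by (metis lessThan_iff neq0_conv)
  qed (use TpathD[OF T] x cr cb odd_pos in \<open>auto simp: st\<close>)
qed

lemma all_less_Suc_Suc: "(\<forall>i<Suc (Suc n). P i) \<longleftrightarrow> P 0 \<and> P 1 \<and> (\<forall>i<n. P (Suc (Suc i)))"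
  by (simp add: All_less_Suc2)

lemma all_odd_pairs_less_Suc_Suc:
  "(\<forall>i j. odd i \<and> odd j \<and> i < j \<and> j < Suc (Suc n) \<longrightarrow> P i j) \<longleftrightarrow>
     (\<forall>j<n. odd j \<longrightarrow> P 1 (Suc (Suc j))) \<and>
     (\<forall>i j. odd i \<and> odd j \<and> i < j \<and> j < n \<longrightarrow> P (Suc (Suc i)) (Suc (Suc j)))"
  (is "?L \<longleftrightarrow> ?R")
proof
  assume ?L then show ?R by auto
next
  assume R: ?R
  show ?L
  proof (intro allI impI)
    fix i j assume "odd i \<and> odd j \<and> i < j \<and> j < Suc (Suc n)"
    then show "P i j" using R by (cases i; cases j) (auto simp: less_Suc_eq_0_disj)
  qed
qed

lemma Tpath_of_Cons2:
  assumes T: "Tpath V pos D (a # b # ys)" and ys: "ys \<noteq> []" "hd ys \<noteq> last ys"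
    and cr: "\<And>i. odd i \<Longrightarrow> i < length ys - 1 \<Longrightarrow> crosses V pos (step ys i) {hd ys, last ys}"
    and cb: "\<And>i j. odd i \<Longrightarrow> odd j \<Longrightarrow> i < j \<Longrightarrow> j < length ys - 1 \<Longrightarrow>
               cross_before V pos (hd ys) (last ys) (step ys i) (step ys j)"
  shows "Tpath V pos D ys"
proof (rule TpathI)
  show "length ys \<ge> 2" using ys by (cases ys; cases "tl ys") auto
  show "set ys \<subseteq> V" using TpathD(2)[OF T] by simp
  show "step ys i \<in> diag V" if "i < length ys - 1" for i
    using TpathD(4)[OF T, of "Suc (Suc i)"] that by simp
  show "inj_on (step ys) {..<length ys - 1}"
  proof (rule inj_onI)
    fix i j assume "i \<in> {..<length ys - 1}" "j \<in> {..<length ys - 1}" "step ys i = step ys j"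
    then have "Suc (Suc i) = Suc (Suc j)"
      using inj_onD[OF TpathD(5)[OF T], of "Suc (Suc i)" "Suc (Suc j)"] by simp
    then show "i = j" by simp
  qed
  show "\<not> crosses V pos (step ys i) e" if "i < length ys - 1" "e \<in> D" for i e
    using TpathD(6)[OF T, of "Suc (Suc i)" e] that by simp
  show "step ys i \<in> D" if "odd i" "i < length ys - 1" for i
    using TpathD(7)[OF T, of "Suc (Suc i)"] that by simp
qed (use ys cr cb in auto)

lemma Tpath_Cons2:
  assumes Dd: "dissection V pos V D" and T: "Tpath V pos D ys"
    and ab: "a \<noteq> last ys" "{a, b} \<in> diag V" "\<forall>e\<in>D. \<not> crosses V pos {a, b} e"
    and b: "{b, hd ys} \<in> D" "crosses V pos {b, hd ys} {a, last ys}"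
    and new: "{a, b} \<noteq> {b, hd ys}" "\<And>i. i < length ys - 1 \<Longrightarrow> step ys i \<notin> {{a, b}, {b, hd ys}}"
    and cr: "\<And>i. odd i \<Longrightarrow> i < length ys - 1 \<Longrightarrow> crosses V pos (step ys i) {a, last ys}"
    and first: "\<And>i. odd i \<Longrightarrow> i < length ys - 1 \<Longrightarrow>
                  cross_before V pos a (last ys) {b, hd ys} (step ys i)"
    and cb: "\<And>i j. odd i \<Longrightarrow> odd j \<Longrightarrow> i < j \<Longrightarrow> j < length ys - 1 \<Longrightarrow>
               cross_before V pos a (last ys) (step ys i) (step ys j)"
  shows "Tpath V pos D (a # b # ys)"
proof -
  have ne: "ys \<noteq> []" using TpathD(1)[OF T] by auto
  have len: "length (a # b # ys) - 1 = Suc (Suc (length ys - 1))" using ne by simp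
  have st: "step (a # b # ys) 0 = {a, b}" "step (b # ys) 0 = {b, hd ys}"
    using ne by (auto simp: step_def hd_conv_nth)
  have last: "last (a # b # ys) = last ys" using ne by simp
  have d: "{b, hd ys} \<in> diag V" "\<forall>e\<in>D. \<not> crosses V pos {b, hd ys} e"
    using Dd b(1) unfolding dissection_def by auto
  have "\<forall>i<length (a # b # ys) - 1. step (a # b # ys) i \<in> diag V"
    unfolding len all_less_Suc_Suc using st ab d TpathD(4)[OF T] by simp
  moreover have "\<forall>i<length (a # b # ys) - 1. \<forall>e\<in>D. \<not> crosses V pos (step (a # b # ys) i) e"
    unfolding len all_less_Suc_Suc using st ab d TpathD(6)[OF T] by simp
  moreover have "\<forall>i<length (a # b # ys) - 1. odd i \<longrightarrow>
      step (a # b # ys) i \<in> D \<and> crosses V pos (step (a # b # ys) i) {a, last ys}"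
    unfolding len all_less_Suc_Suc using st b cr TpathD(7)[OF T] by simp
  moreover have "\<forall>i j. odd i \<and> odd j \<and> i < j \<and> j < length (a # b # ys) - 1 \<longrightarrow>
      cross_before V pos a (last ys) (step (a # b # ys) i) (step (a # b # ys) j)"
    unfolding len all_odd_pairs_less_Suc_Suc using st first cb by simp
  moreover have "inj_on (step (a # b # ys)) {..<length (a # b # ys) - 1}"
    using TpathD(5)[OF T] new
    unfolding inj_on_def Ball_def lessThan_iff len all_less_Suc_Suc by (simp add: st) blast
  moreover have "set (a # b # ys) \<subseteq> V"
    using ab(2) TpathD(2)[OF T] by (simp add: doubleton_in_diag_iff)
  ultimately show ?thesis using ab(1) unfolding Tpath_def last by auto
qed

section \<open>A diagonal with an empty side\<close>

locale split_dissection =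
  fixes V :: "'v set" and pos :: "'v \<Rightarrow> nat" and D D2 :: "'v set set" and V2 :: "'v set"
    and \<zeta> \<eta> \<alpha> \<beta> :: 'v
  assumes polygon: "polygon V pos"
    and dissection: "dissection V pos V D"
    and D_eq: "D = insert {\<zeta>, \<eta>} D2"
    and V2_eq: "V2 = {\<epsilon> \<in> V. cbtw V pos \<eta> \<epsilon> \<zeta>}"
    and D2_diag: "D2 \<subseteq> diag V2"
    and \<alpha>: "\<alpha> \<in> V" "btw V pos \<zeta> \<alpha> \<eta>"
    and \<beta>: "\<beta> \<in> V" "btw V pos \<eta> \<beta> \<zeta>"
begin

abbreviation r :: "'v \<Rightarrow> nat" where "r \<equiv> rot V pos \<zeta>"

lemma d_in_D: "{\<zeta>, \<eta>} \<in> D"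
  using D_eq by simp

lemma D_not_crosses: "e \<in> D \<Longrightarrow> e' \<in> D \<Longrightarrow> \<not> crosses V pos e e'"
  using dissection unfolding dissection_def by blast

lemma zeta_eta_in_V: "\<zeta> \<in> V" "\<eta> \<in> V" "\<zeta> \<noteq> \<eta>"
proof -
  have "{\<zeta>, \<eta>} \<in> diag V" using dissection d_in_D unfolding dissection_def by blast
  then show "\<zeta> \<in> V" "\<eta> \<in> V" "\<zeta> \<noteq> \<eta>" by (simp_all add: doubleton_in_diag_iff)
qed

lemma btw_iff: "a \<in> V \<Longrightarrow> x \<in> V \<Longrightarrow> b \<in> V \<Longrightarrow> btw V pos a x b \<longleftrightarrow> cyclic (r a) (r x) (r b)"
  using btw_iff_cyclic[OF polygon zeta_eta_in_V(1)] by blast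

lemma r_eq_iff: "x \<in> V \<Longrightarrow> y \<in> V \<Longrightarrow> r x = r y \<longleftrightarrow> x = y"
  using rot_eq_iff[OF polygon zeta_eta_in_V(1)] by blast

lemma r_ordering: "r \<zeta> = 0" "0 < r \<alpha>" "r \<alpha> < r \<eta>" "r \<eta> < r \<beta>"
proof -
  show "r \<zeta> = 0" by (simp add: rot_def)
  then show "0 < r \<alpha>" "r \<alpha> < r \<eta>" "r \<eta> < r \<beta>"
    using \<alpha> \<beta> zeta_eta_in_V btw_iff[of \<zeta> \<alpha> \<eta>] btw_iff[of \<eta> \<beta> \<zeta>] unfolding cyclic_def by auto
qed

lemma distinct_vertices: "distinct [\<alpha>, \<zeta>, \<eta>, \<beta>]"
  using r_ordering by auto

lemma mem_V2_iff: "v \<in> V2 \<longleftrightarrow> v \<in> V \<and> (r v = 0 \<or> r \<eta> \<le> r v)"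
proof -
  have "cbtw V pos \<eta> v \<zeta> \<longleftrightarrow> r v = 0 \<or> r \<eta> \<le> r v" if "v \<in> V" for v
    using that zeta_eta_in_V r_ordering r_eq_iff[OF that zeta_eta_in_V(1)]
      r_eq_iff[OF that zeta_eta_in_V(2)]
      btw_iff[of \<eta> v \<zeta>] unfolding cbtw_def cyclic_def by auto
  then show ?thesis using V2_eq by auto
qed

lemma D_subset_diag_V2: "D \<subseteq> diag V2"
proof -
  have "\<zeta> \<in> V2" "\<eta> \<in> V2" using mem_V2_iff zeta_eta_in_V r_ordering by auto
  then show ?thesis using D_eq D2_diag zeta_eta_in_V(3) by (auto simp: doubleton_in_diag_iff)
qed

lemma D_elemE:
  assumes "e \<in> D"
  obtains p q where "e = {p, q}" "p \<in> V2" "q \<in> V2" "p \<noteq> q"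
  using D_subset_diag_V2 assms unfolding diag_def by blast

lemma D_vertex_in_V2: "e \<in> D \<Longrightarrow> x \<in> e \<Longrightarrow> x \<in> V2"
  using D_subset_diag_V2 by (auto simp: diag_def)

lemma alpha_notin_V2: "\<alpha> \<notin> V2" and beta_in_V2: "\<beta> \<in> V2" and eta_in_V2: "\<eta> \<in> V2"
  using mem_V2_iff r_ordering \<beta>(1) zeta_eta_in_V by auto

lemma V2_outside_arc: "v \<in> V2 \<Longrightarrow> v \<noteq> \<eta> \<Longrightarrow> r v < r \<alpha> \<or> r \<eta> < r v"
  using mem_V2_iff r_eq_iff[of v \<eta>] zeta_eta_in_V r_ordering by fastforce

lemma btw_through_alpha_iff_eta:
  assumes "x \<in> V2" "x \<noteq> \<eta>" "y \<in> V2" "y \<noteq> \<eta>"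
  shows "btw V pos x \<alpha> y \<longleftrightarrow> btw V pos x \<eta> y"
proof -
  have "x \<in> V" "y \<in> V" using assms mem_V2_iff by auto
  then show ?thesis
    using btw_iff[of x \<alpha> y] btw_iff[of x \<eta> y] \<alpha>(1) zeta_eta_in_V(2)
      cyclic_shift(1)[OF less_imp_le[OF r_ordering(3)]
        V2_outside_arc[OF assms(1,2)] V2_outside_arc[OF assms(3,4)]]
    by simp
qed

lemma btw_from_alpha_iff_eta:
  assumes "x \<in> V2" "x \<noteq> \<eta>"
  shows "btw V pos \<alpha> x \<beta> \<longleftrightarrow> btw V pos \<eta> x \<beta>" "btw V pos \<beta> x \<alpha> \<longleftrightarrow> btw V pos \<beta> x \<eta>"
proof -
  have x: "x \<in> V" using assms mem_V2_iff by auto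
  have "r \<beta> < r \<alpha> \<or> r \<eta> < r \<beta>" using r_ordering by simp
  note shift = cyclic_shift[OF less_imp_le[OF r_ordering(3)] V2_outside_arc[OF assms] this]
    cyclic_shift[OF less_imp_le[OF r_ordering(3)] this V2_outside_arc[OF assms]]
  show "btw V pos \<alpha> x \<beta> \<longleftrightarrow> btw V pos \<eta> x \<beta>" "btw V pos \<beta> x \<alpha> \<longleftrightarrow> btw V pos \<beta> x \<eta>"
    using btw_iff x \<alpha>(1) \<beta>(1) zeta_eta_in_V(2) shift by simp_all
qed

lemma crosses_alpha_iff_eta:
  assumes "e \<in> D" "\<eta> \<notin> e"
  shows "crosses V pos e {\<alpha>, \<beta>} \<longleftrightarrow> crosses V pos e {\<eta>, \<beta>}"
proof -
  obtain p q where e: "e = {p, q}" "p \<in> V2" "q \<in> V2" using D_elemE[OF assms(1)] by metis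
  then have "p \<noteq> \<alpha>" "q \<noteq> \<alpha>" "p \<noteq> \<eta>" "q \<noteq> \<eta>" using alpha_notin_V2 assms(2) by auto
  then show ?thesis
    unfolding e(1) crosses_iff using e btw_through_alpha_iff_eta distinct_vertices by auto
qed

lemma cross_before_alpha_iff_eta:
  assumes "e \<in> D" "e' \<in> D" "\<eta> \<notin> e" "\<eta> \<notin> e'"
  shows "cross_before V pos \<alpha> \<beta> e e' \<longleftrightarrow> cross_before V pos \<eta> \<beta> e e'"
proof -
  have "x \<in> V2" "x \<noteq> \<eta>" if "x \<in> e \<union> e'" for x
    using that assms D_subset_diag_V2 by (auto simp: diag_def)
  then have "btw V pos \<alpha> x \<beta> \<longleftrightarrow> btw V pos \<eta> x \<beta>" "btw V pos \<beta> x \<alpha> \<longleftrightarrow> btw V pos \<beta> x \<eta>"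
    if "x \<in> e \<union> e'" for x
    using that btw_from_alpha_iff_eta by blast+
  then show ?thesis unfolding cross_before_def by (intro conj_cong refl ex_cong1) auto
qed

lemma later_step_avoids_eta:
  assumes "e \<in> D" "e' \<in> D" "\<eta> \<notin> e" "cross_before V pos \<alpha> \<beta> e e'"
  shows "\<eta> \<notin> e'"
proof -
  obtain a b a' b' where ab: "e = {a, b}" "e' = {a', b'}" and
    c: "btw V pos \<alpha> a \<beta>" "btw V pos \<beta> b' \<alpha>" "a' = a \<or> btw V pos a a' \<beta>"
    using assms(4) unfolding cross_before_def by blast
  have V2: "a \<in> V2" "a' \<in> V2" "b' \<in> V2"
    using ab assms(1,2) D_subset_diag_V2 by (auto simp: diag_def doubleton_eq_iff)
  then have V: "a \<in> V" "a' \<in> V" "b' \<in> V" using mem_V2_iff by auto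
  (* the endpoint a of e on the arc from \<alpha> to \<beta> lies beyond \<eta>, and a' lies between a and \<beta> *)
  have "r \<alpha> < r a" "r a < r \<beta>"
    using c(1) btw_iff[of \<alpha> a \<beta>] V(1) \<alpha>(1) \<beta>(1) r_ordering cyclic_iff_less by auto
  then have "r \<eta> < r a"
    using V2_outside_arc[OF V2(1)] ab(1) assms(3) by auto
  then have "r \<eta> < r a'"
    using c(3) btw_iff[of a a' \<beta>] V \<beta>(1) cyclic_iff_less \<open>r a < r \<beta>\<close> by auto
  moreover have "r b' < r \<alpha> \<or> r \<beta> < r b'"
    using c(2) btw_iff[of \<beta> b' \<alpha>] V \<alpha>(1) \<beta>(1) r_ordering cyclic_iff_greater by auto
  ultimately show ?thesis using ab(2) r_ordering by auto
qed

lemma d_cross_before: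
  assumes "e \<in> D" "crosses V pos e {\<eta>, \<beta>}"
  shows "cross_before V pos \<alpha> \<beta> {\<zeta>, \<eta>} e"
proof -
  have first: "cross_before V pos \<alpha> \<beta> {\<zeta>, \<eta>} {p, q}"
    if pq: "p \<in> V2" "q \<in> V2" "p \<noteq> \<eta>" "q \<noteq> \<eta>" and c: "btw V pos p \<eta> q" "btw V pos q \<beta> p"
    for p q
  proof -
    have V: "p \<in> V" "q \<in> V" using pq mem_V2_iff by auto
    have "r p = 0 \<or> r \<eta> < r p" "r q = 0 \<or> r \<eta> < r q"
      using pq V2_outside_arc mem_V2_iff r_ordering by fastforce+
    moreover have "cyclic (r p) (r \<eta>) (r q)" "cyclic (r q) (r \<beta>) (r p)"
      using c btw_iff V zeta_eta_in_V(2) \<beta>(1) by simp_all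
    ultimately have q: "r \<eta> < r q" "r q < r \<beta>" and p: "r p = 0 \<or> r \<beta> < r p"
      using r_ordering(4) unfolding cyclic_def by auto
    have "p = \<zeta> \<or> btw V pos \<beta> p \<zeta>"
      using p btw_iff[of \<beta> p \<zeta>] r_eq_iff[of p \<zeta>] V \<beta>(1) zeta_eta_in_V(1) r_ordering
      unfolding cyclic_def by auto
    moreover have "btw V pos \<alpha> \<eta> \<beta>" "btw V pos \<beta> \<zeta> \<alpha>" "btw V pos \<alpha> q \<beta>"
      "btw V pos \<beta> p \<alpha>" "btw V pos \<eta> q \<beta>"
      using p q r_ordering btw_iff[of \<alpha> \<eta> \<beta>] btw_iff[of \<beta> \<zeta> \<alpha>] btw_iff[of \<alpha> q \<beta>]
        btw_iff[of \<beta> p \<alpha>] btw_iff[of \<eta> q \<beta>] V \<alpha>(1) \<beta>(1) zeta_eta_in_V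
      unfolding cyclic_def by auto
    moreover have "{\<zeta>, \<eta>} \<noteq> {p, q}" using pq by auto
    ultimately show ?thesis unfolding cross_before_def
      by (intro conjI exI[of _ \<eta>] exI[of _ \<zeta>] exI[of _ q] exI[of _ p]) (auto simp: insert_commute)
  qed
  obtain p q where e: "e = {p, q}" "p \<in> V2" "q \<in> V2" using D_elemE[OF assms(1)] by metis
  moreover have "p \<noteq> \<eta>" "q \<noteq> \<eta>" using crosses_disjoint[OF assms(2)] e(1) by auto
  moreover have "btw V pos p \<eta> q \<and> btw V pos q \<beta> p \<or> btw V pos q \<eta> p \<and> btw V pos p \<beta> q"
    using assms(2) unfolding e(1) crosses_iff by auto
  ultimately show ?thesis using first[of p q] first[of q p] by (auto simp: insert_commute)
qed

lemma alpha_zeta_not_crosses: "e \<in> D \<Longrightarrow> \<not> crosses V pos {\<alpha>, \<zeta>} e"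
proof -
  assume "e \<in> D"
  then obtain p q where e: "e = {p, q}" "p \<in> V2" "q \<in> V2" using D_elemE by metis
  have "\<not> btw V pos \<zeta> x \<alpha>" if "x \<in> V2" for x
    using that mem_V2_iff btw_iff[of \<zeta> x \<alpha>] zeta_eta_in_V(1) \<alpha>(1) r_ordering cyclic_iff_less by auto
  then show ?thesis unfolding e(1) crosses_iff using e by auto
qed

lemma d_crosses_alpha_beta: "crosses V pos {\<zeta>, \<eta>} {\<alpha>, \<beta>}"
  using distinct_vertices \<alpha>(2) \<beta>(2) unfolding crosses_iff by auto

lemma Tpath_nth_in_V2:
  assumes "Tpath V pos D xs" "last xs = \<beta>" "1 \<le> k" "k < length xs"
  shows "xs ! k \<in> V2"
  using nth_in_odd_step[OF assms(3,4)] TpathD(7)[OF assms(1)] D_vertex_in_V2 beta_in_V2 assms(2)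
  by metis

lemma Tpath_nth_ne_eta:
  assumes "Tpath V pos D xs" "last xs = \<beta>"
    and "\<And>i. odd i \<Longrightarrow> i < length xs - 1 \<Longrightarrow> \<eta> \<notin> step xs i"
    and "1 \<le> k" "k < length xs"
  shows "xs ! k \<noteq> \<eta>"
  using nth_in_odd_step[OF assms(4,5)] assms(2,3) distinct_vertices by auto

lemma Tpath_from_eta_avoids_eta:
  assumes "Tpath V pos D xs" "hd xs = \<eta>" "odd i" "i < length xs - 1"
  shows "\<eta> \<notin> step xs i"
  using crosses_disjoint[OF TpathD(8)[OF assms(1,3,4)]] assms(2) by auto

lemma Tpath_from_alpha_avoids_eta_after:
  assumes T: "Tpath V pos D xs" "hd xs = \<alpha>" "last xs = \<beta>"
    and j: "odd j" "j < length xs - 1" "\<eta> \<notin> step xs j"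
    and i: "odd i" "j \<le> i" "i < length xs - 1"
  shows "\<eta> \<notin> step xs i"
proof (cases "i = j")
  case False
  then have "cross_before V pos \<alpha> \<beta> (step xs j) (step xs i)"
    using TpathD(9)[OF T(1), of j i] T j i by simp
  then show ?thesis using later_step_avoids_eta TpathD(7)[OF T(1)] j i by blast
qed (use j in simp)

lemma Tpath_alpha_to_eta:
  assumes T: "Tpath V pos D xs" and ends: "hd xs = \<alpha>" "last xs = \<beta>"
    and xs: "length xs \<ge> 3" "xs ! 1 = \<zeta>" "xs ! 2 \<noteq> \<eta>"
  shows "Tpath V pos D (\<eta> # tl xs)"
proof -
  have "\<eta> \<notin> step xs 1" using xs zeta_eta_in_V by (auto simp: step_def numeral_2_eq_2)
  then have avoid: "\<eta> \<notin> step xs i" if "odd i" "i < length xs - 1" for i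
    using Tpath_from_alpha_avoids_eta_after[OF T ends, of 1 i] that xs(1) odd_pos by fastforce
  have later: "xs ! k \<noteq> \<eta>" if "1 \<le> k" "k < length xs" for k
    using Tpath_nth_ne_eta[OF T ends(2) avoid that] .
  show ?thesis
  proof (rule Tpath_Cons_tl[OF T])
    show "\<eta> \<noteq> last xs" using ends distinct_vertices by auto
    show "{\<eta>, xs ! 1} \<in> diag V" using xs zeta_eta_in_V by (auto simp: doubleton_in_diag_iff)
    show "\<forall>e\<in>D. \<not> crosses V pos {\<eta>, xs ! 1} e"
      using D_not_crosses d_in_D xs(2) by (simp add: insert_commute)
    show "step xs i \<noteq> {\<eta>, xs ! 1}" if "0 < i" "i < length xs - 1" for i
      using later[of i] later[of "Suc i"] that by (auto simp: step_def doubleton_eq_iff)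
    show "crosses V pos (step xs i) {\<eta>, last xs}" if "odd i" "i < length xs - 1" for i
      using TpathD(7,8)[OF T that] crosses_alpha_iff_eta avoid[OF that] ends by auto
    show "cross_before V pos \<eta> (last xs) (step xs i) (step xs j)"
      if "odd i" "odd j" "i < j" "j < length xs - 1" for i j
      using TpathD(7,9)[OF T] cross_before_alpha_iff_eta avoid that ends by auto
  qed
qed

lemma Tpath_eta_zeta_shape:
  assumes T: "Tpath V pos D ys" and ends: "hd ys = \<eta>" "last ys = \<beta>" and "ys ! 1 = \<zeta>"
  shows "length ys \<ge> 3" "ys ! 2 \<noteq> \<eta>"
proof -
  have "ys \<noteq> []" using TpathD(1)[OF T] by auto
  then have "length ys \<noteq> 2" using assms(4) ends(2) distinct_vertices by (auto simp: last_conv_nth)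
  then show len: "length ys \<ge> 3" using TpathD(1)[OF T] by simp
  show "ys ! 2 \<noteq> \<eta>"
  proof
    assume "ys ! 2 = \<eta>"
    then have "step ys 1 = step ys 0"
      using ends(1) assms(4) \<open>ys \<noteq> []\<close> by (auto simp: step_def hd_conv_nth numeral_2_eq_2)
    moreover have "(1::nat) \<in> {..<length ys - 1}" "(0::nat) \<in> {..<length ys - 1}" using len by auto
    ultimately have "(1::nat) = 0" by (rule inj_onD[OF TpathD(5)[OF T]])
    then show False by simp
  qed
qed

lemma Tpath_eta_to_alpha:
  assumes T: "Tpath V pos D ys" and ends: "hd ys = \<eta>" "last ys = \<beta>" and ys: "ys ! 1 = \<zeta>"
  shows "Tpath V pos D (\<alpha> # tl ys)"
proof (rule Tpath_Cons_tl[OF T])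
  note avoid = Tpath_from_eta_avoids_eta[OF T ends(1)]
  show "\<alpha> \<noteq> last ys" using ends distinct_vertices by auto
  show "{\<alpha>, ys ! 1} \<in> diag V"
    using ys zeta_eta_in_V \<alpha>(1) distinct_vertices by (simp add: doubleton_in_diag_iff)
  show "\<forall>e\<in>D. \<not> crosses V pos {\<alpha>, ys ! 1} e" using alpha_zeta_not_crosses ys by simp
  show "step ys i \<noteq> {\<alpha>, ys ! 1}" if "0 < i" "i < length ys - 1" for i
  proof -
    have "ys ! i \<in> V2" "ys ! Suc i \<in> V2" using Tpath_nth_in_V2[OF T ends(2)] that by simp_all
    then have "\<alpha> \<notin> step ys i" using alpha_notin_V2 by (auto simp: step_def)
    then show ?thesis by auto
  qed
  show "crosses V pos (step ys i) {\<alpha>, last ys}" if "odd i" "i < length ys - 1" for i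
    using TpathD(7,8)[OF T that] crosses_alpha_iff_eta avoid[OF that] ends by auto
  show "cross_before V pos \<alpha> (last ys) (step ys i) (step ys j)"
    if "odd i" "odd j" "i < j" "j < length ys - 1" for i j
    using TpathD(7,9)[OF T] cross_before_alpha_iff_eta avoid that ends by auto
qed

lemma Tpath_alpha_zeta_eta:
  assumes T: "Tpath V pos D (\<alpha> # \<zeta> # ys)" and ys: "ys \<noteq> []" "hd ys = \<eta>" "last ys = \<beta>"
  shows "ys ! 1 \<noteq> \<zeta>" "\<And>i. odd i \<Longrightarrow> i < length ys - 1 \<Longrightarrow> \<eta> \<notin> step ys i"
proof -
  let ?xs = "\<alpha> # \<zeta> # ys"
  have ends: "hd ?xs = \<alpha>" "last ?xs = \<beta>" using ys by auto
  have len: "length ys \<ge> 2" using ys distinct_vertices by (cases ys; cases "tl ys") auto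
  have s12: "step ?xs 1 = {\<zeta>, \<eta>}" "step ?xs 2 = {\<eta>, ys ! 1}"
    using ys by (auto simp: step_def numeral_2_eq_2 hd_conv_nth)
  have inj: "i = j" if "step ?xs i = step ?xs j" "i < length ys + 1" "j < length ys + 1" for i j
    using inj_onD[OF TpathD(5)[OF T]] that by simp
  have "step ?xs 2 \<in> diag V" using TpathD(4)[OF T, of 2] len by simp
  then have y1: "ys ! 1 \<noteq> \<eta>" using s12 by (auto simp: doubleton_in_diag_iff)
  show "ys ! 1 \<noteq> \<zeta>"
  proof
    assume "ys ! 1 = \<zeta>"
    then have "step ?xs 2 = step ?xs 1" using s12 by auto
    then show False using inj[of 2 1] len by force
  qed
  show "\<eta> \<notin> step ys i" if "odd i" "i < length ys - 1" for i
  proof -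
    have "ys ! 2 \<noteq> \<eta>"
    proof
      assume "ys ! 2 = \<eta>"
      then have "step ?xs 3 = step ?xs 2"
        using s12 by (auto simp: step_def numeral_3_eq_3 numeral_2_eq_2)
      moreover have "3 < length ys + 1" using that odd_pos[of i] by linarith
      ultimately show False using inj[of 3 2] by simp
    qed
    then have "\<eta> \<notin> step ?xs 3" using y1 by (auto simp: step_def numeral_3_eq_3 numeral_2_eq_2)
    then have "\<eta> \<notin> step ?xs (Suc (Suc i))"
      using Tpath_from_alpha_avoids_eta_after[OF T ends, of 3 "Suc (Suc i)"] that odd_pos
      by fastforce
    then show ?thesis by simp
  qed
qed

lemma Tpath_drop_alpha_zeta:
  assumes T: "Tpath V pos D (\<alpha> # \<zeta> # ys)" and ys: "ys \<noteq> []" "hd ys = \<eta>" "last ys = \<beta>"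
  shows "Tpath V pos D ys"
proof (rule Tpath_of_Cons2[OF T ys(1)])
  note avoid = Tpath_alpha_zeta_eta(2)[OF assms]
  show "hd ys \<noteq> last ys" using ys distinct_vertices by simp
  show "crosses V pos (step ys i) {hd ys, last ys}" if "odd i" "i < length ys - 1" for i
    using TpathD(7,8)[OF T, of "Suc (Suc i)"] crosses_alpha_iff_eta avoid[OF that] that ys by simp
  show "cross_before V pos (hd ys) (last ys) (step ys i) (step ys j)"
    if "odd i" "odd j" "i < j" "j < length ys - 1" for i j
    using TpathD(9)[OF T, of "Suc (Suc i)" "Suc (Suc j)"]
      TpathD(7)[OF T, of "Suc (Suc i)"] TpathD(7)[OF T, of "Suc (Suc j)"]
      cross_before_alpha_iff_eta avoid that ys by simp
qed

lemma Tpath_Cons_alpha_zeta: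
  assumes T: "Tpath V pos D ys" and ends: "hd ys = \<eta>" "last ys = \<beta>" and ys: "ys ! 1 \<noteq> \<zeta>"
  shows "Tpath V pos D (\<alpha> # \<zeta> # ys)"
proof (rule Tpath_Cons2[OF dissection T])
  note avoid = Tpath_from_eta_avoids_eta[OF T ends(1)]
  have ne: "ys \<noteq> []" using TpathD(1)[OF T] by auto
  show "\<alpha> \<noteq> last ys" using ends distinct_vertices by auto
  show "{\<alpha>, \<zeta>} \<in> diag V"
    using zeta_eta_in_V \<alpha>(1) distinct_vertices by (simp add: doubleton_in_diag_iff)
  show "\<forall>e\<in>D. \<not> crosses V pos {\<alpha>, \<zeta>} e" using alpha_zeta_not_crosses by simp
  show "{\<zeta>, hd ys} \<in> D" "crosses V pos {\<zeta>, hd ys} {\<alpha>, last ys}"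
    using d_in_D d_crosses_alpha_beta ends by simp_all
  show "{\<alpha>, \<zeta>} \<noteq> {\<zeta>, hd ys}" using ends distinct_vertices by (auto simp: doubleton_eq_iff)
  show "step ys i \<notin> {{\<alpha>, \<zeta>}, {\<zeta>, hd ys}}" if "i < length ys - 1" for i
  proof -
    have "ys ! k \<in> V2" if "k < length ys" for k
      using Tpath_nth_in_V2[OF T ends(2), of k] that eta_in_V2 ends(1) ne
      by (cases "k = 0") (auto simp: hd_conv_nth)
    then have "\<alpha> \<notin> step ys i" using alpha_notin_V2 that by (auto simp: step_def)
    moreover have "step ys i \<noteq> {\<zeta>, \<eta>}"
    proof (cases "i = 0")
      case True
      then show ?thesis
        using ys ends ne zeta_eta_in_V(3) by (auto simp: step_def hd_conv_nth doubleton_eq_iff)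
    next
      case False
      then have "ys ! i \<noteq> \<eta>" "ys ! Suc i \<noteq> \<eta>"
        using Tpath_nth_ne_eta[OF T ends(2) avoid] that by auto
      then show ?thesis by (auto simp: step_def doubleton_eq_iff)
    qed
    ultimately show ?thesis using ends by auto
  qed
  show "crosses V pos (step ys i) {\<alpha>, last ys}" if "odd i" "i < length ys - 1" for i
    using TpathD(7,8)[OF T that] crosses_alpha_iff_eta avoid[OF that] ends by auto
  show "cross_before V pos \<alpha> (last ys) {\<zeta>, hd ys} (step ys i)" if "odd i" "i < length ys - 1" for i
    using d_cross_before TpathD(7,8)[OF T that] ends by simp
  show "cross_before V pos \<alpha> (last ys) (step ys i) (step ys j)"
    if "odd i" "odd j" "i < j" "j < length ys - 1" for i j
    using TpathD(7,9)[OF T] cross_before_alpha_iff_eta avoid that ends by auto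
qed

lemma bij_betw_alpha_to_eta:
  "bij_betw (\<lambda>\<pi>. \<eta> # tl \<pi>)
     {\<pi> \<in> Tpaths V pos D \<alpha> \<beta>. length \<pi> \<ge> 3 \<and> \<pi> ! 1 = \<zeta> \<and> \<pi> ! 2 \<noteq> \<eta>}
     {\<rho> \<in> Tpaths V pos D \<eta> \<beta>. \<rho> ! 1 = \<zeta>}"
  (is "bij_betw _ ?A ?B")
proof (rule bij_betw_byWitness[where f' = "\<lambda>\<rho>. \<alpha> # tl \<rho>"])
  show "\<forall>\<pi> \<in> ?A. \<alpha> # tl (\<eta> # tl \<pi>) = \<pi>" "\<forall>\<rho> \<in> ?B. \<eta> # tl (\<alpha> # tl \<rho>) = \<rho>"
    by (auto elim: Tpaths_elemE)
  show "(\<lambda>\<pi>. \<eta> # tl \<pi>) ` ?A \<subseteq> ?B"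
  proof (rule image_subsetI)
    fix \<pi> assume "\<pi> \<in> ?A"
    then have \<pi>: "\<pi> \<in> Tpaths V pos D \<alpha> \<beta>" "length \<pi> \<ge> 3" "\<pi> ! 1 = \<zeta>" "\<pi> ! 2 \<noteq> \<eta>" by simp_all
    obtain \<pi>' where \<pi>': "\<pi> = \<alpha> # \<pi>'" using \<pi>(1) by (rule Tpaths_elemE)
    have T: "Tpath V pos D \<pi>" "hd \<pi> = \<alpha>" "last \<pi> = \<beta>" using \<pi>(1) unfolding Tpaths_def by auto
    have "Tpath V pos D (\<eta> # \<pi>')" using Tpath_alpha_to_eta[OF T \<pi>(2-4)] \<pi>' by simp
    then show "\<eta> # tl \<pi> \<in> ?B" using T \<pi> \<pi>' by (auto simp: Tpaths_Cons_conv)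
  qed
  show "(\<lambda>\<rho>. \<alpha> # tl \<rho>) ` ?B \<subseteq> ?A"
  proof (rule image_subsetI)
    fix \<rho> assume "\<rho> \<in> ?B"
    then have \<rho>: "\<rho> \<in> Tpaths V pos D \<eta> \<beta>" "\<rho> ! 1 = \<zeta>" by simp_all
    obtain \<rho>' where \<rho>': "\<rho> = \<eta> # \<rho>'" using \<rho>(1) by (rule Tpaths_elemE)
    have T: "Tpath V pos D \<rho>" "hd \<rho> = \<eta>" "last \<rho> = \<beta>" using \<rho>(1) unfolding Tpaths_def by auto
    have "Tpath V pos D (\<alpha> # \<rho>')" using Tpath_eta_to_alpha[OF T \<rho>(2)] \<rho>' by simp
    then show "\<alpha> # tl \<rho> \<in> ?A"
      using Tpath_eta_zeta_shape[OF T \<rho>(2)] T \<rho> \<rho>' by (auto simp: Tpaths_Cons_conv)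
  qed
qed

lemma bij_betw_drop_alpha_zeta:
  "bij_betw (\<lambda>\<pi>. \<eta> # drop 3 \<pi>)
     {\<pi> \<in> Tpaths V pos D \<alpha> \<beta>. length \<pi> \<ge> 3 \<and> \<pi> ! 1 = \<zeta> \<and> \<pi> ! 2 = \<eta>}
     {\<sigma> \<in> Tpaths V pos D \<eta> \<beta>. \<sigma> ! 1 \<noteq> \<zeta>}"
  (is "bij_betw _ ?A ?B")
proof (rule bij_betw_byWitness[where f' = "\<lambda>\<sigma>. \<alpha> # \<zeta> # \<sigma>"])
  have A_conv: "\<pi> = \<alpha> # \<zeta> # \<eta> # drop 3 \<pi>" if "\<pi> \<in> ?A" for \<pi>
  proof -
    have \<pi>: "length \<pi> \<ge> 3" "hd \<pi> = \<alpha>" "\<pi> ! 1 = \<zeta>" "\<pi> ! 2 = \<eta>"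
      using that unfolding Tpaths_def by auto
    have "\<pi> = hd \<pi> # \<pi> ! 1 # \<pi> ! 2 # drop 3 \<pi>" using list_conv_nth_012[OF \<pi>(1)] .
    then show ?thesis unfolding \<pi>(2-4) .
  qed
  then show "\<forall>\<pi> \<in> ?A. \<alpha> # \<zeta> # \<eta> # drop 3 \<pi> = \<pi>" by (intro ballI) (rule sym)
  show "\<forall>\<sigma> \<in> ?B. \<eta> # drop 3 (\<alpha> # \<zeta> # \<sigma>) = \<sigma>"
    by (auto elim: Tpaths_elemE simp: numeral_3_eq_3)
  show "(\<lambda>\<pi>. \<eta> # drop 3 \<pi>) ` ?A \<subseteq> ?B"
  proof (rule image_subsetI)
    fix \<pi> assume \<pi>: "\<pi> \<in> ?A"
    define \<sigma> where "\<sigma> = \<eta> # drop 3 \<pi>"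
    have eq: "\<pi> = \<alpha> # \<zeta> # \<sigma>" using A_conv[OF \<pi>] unfolding \<sigma>_def .
    have "\<sigma> \<noteq> []" unfolding \<sigma>_def by simp
    then have T: "Tpath V pos D (\<alpha> # \<zeta> # \<sigma>)" "last \<sigma> = \<beta>"
      using \<pi> unfolding Tpaths_def eq by auto
    then show "\<eta> # drop 3 \<pi> \<in> ?B"
      using Tpath_drop_alpha_zeta[OF T(1) _ _ T(2)] Tpath_alpha_zeta_eta(1)[OF T(1) _ _ T(2)]
      unfolding \<sigma>_def by (simp add: Tpaths_def)
  qed
  show "(\<lambda>\<sigma>. \<alpha> # \<zeta> # \<sigma>) ` ?B \<subseteq> ?A"
  proof (rule image_subsetI)
    fix \<sigma> assume "\<sigma> \<in> ?B"
    then have \<sigma>: "\<sigma> \<in> Tpaths V pos D \<eta> \<beta>" "\<sigma> ! 1 \<noteq> \<zeta>" by simp_all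
    obtain \<sigma>' where \<sigma>': "\<sigma> = \<eta> # \<sigma>'" using \<sigma>(1) by (rule Tpaths_elemE)
    have T: "Tpath V pos D \<sigma>" "hd \<sigma> = \<eta>" "last \<sigma> = \<beta>" using \<sigma>(1) unfolding Tpaths_def by auto
    show "\<alpha> # \<zeta> # \<sigma> \<in> ?A"
      using Tpath_Cons_alpha_zeta[OF T \<sigma>(2)] T \<sigma>' by (auto simp: Tpaths_Cons_conv numeral_2_eq_2)
  qed
qed

end

theorem lemma3p8:
  fixes V :: "'v set" and pos :: "'v \<Rightarrow> nat" and D D2 :: "'v set set"
    and d :: "'v set" and \<zeta> \<eta> \<alpha> \<beta> :: 'v and f :: "'v set \<Rightarrow> 'a::semifield_mult"
  assumes P: "polygon V pos"
    and D: "dissection V pos V D" and Dne: "D \<noteq> {}"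
    and d: "d = {\<zeta>, \<eta>}" "d \<in> D"
    and V2: "V2 = {\<epsilon> \<in> V. cbtw V pos \<eta> \<epsilon> \<zeta>}"
    and D2: "dissection V pos V2 D2" and DD: "D = {d} \<union> D2"
    and U1: "U1 = {\<epsilon> \<in> V. btw V pos \<zeta> \<epsilon> \<eta>}"
    and U2: "U2 = {\<epsilon> \<in> V. btw V pos \<eta> \<epsilon> \<zeta>}"
    and \<alpha>: "\<alpha> \<in> U1" and \<beta>: "\<beta> \<in> U2"
  shows
    "bij_betw (\<lambda>\<pi>. \<eta> # tl \<pi>)
        {\<pi> \<in> Tpaths V pos D \<alpha> \<beta>. length \<pi> \<ge> 3 \<and> \<pi> ! 1 = \<zeta> \<and> \<pi> ! 2 \<noteq> \<eta>}
        {\<rho> \<in> Tpaths V pos D \<eta> \<beta>. \<rho> ! 1 = \<zeta>}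
     \<and> (\<forall>\<pi> \<in> {\<pi> \<in> Tpaths V pos D \<alpha> \<beta>. length \<pi> \<ge> 3 \<and> \<pi> ! 1 = \<zeta> \<and> \<pi> ! 2 \<noteq> \<eta>}.
          f {\<alpha>, \<zeta>} / f {\<eta>, \<zeta>} * Tweight f (\<eta> # tl \<pi>) = Tweight f \<pi>)
     \<and> bij_betw (\<lambda>\<pi>. \<eta> # drop 3 \<pi>)
        {\<pi> \<in> Tpaths V pos D \<alpha> \<beta>. length \<pi> \<ge> 3 \<and> \<pi> ! 1 = \<zeta> \<and> \<pi> ! 2 = \<eta>}
        {\<sigma> \<in> Tpaths V pos D \<eta> \<beta>. \<sigma> ! 1 \<noteq> \<zeta>}
     \<and> (\<forall>\<pi> \<in> {\<pi> \<in> Tpaths V pos D \<alpha> \<beta>. length \<pi> \<ge> 3 \<and> \<pi> ! 1 = \<zeta> \<and> \<pi> ! 2 = \<eta>}.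
          f {\<alpha>, \<zeta>} / f {\<zeta>, \<eta>} * Tweight f (\<eta> # drop 3 \<pi>) = Tweight f \<pi>)"
proof -
  interpret split_dissection V pos D D2 V2 \<zeta> \<eta> \<alpha> \<beta>
  proof
    show "D = insert {\<zeta>, \<eta>} D2" using DD d by simp
    show "D2 \<subseteq> diag V2" using D2 unfolding dissection_def by blast
  qed (use P D V2 \<alpha> \<beta> U1 U2 in auto)
  show ?thesis
  proof (intro conjI ballI bij_betw_alpha_to_eta bij_betw_drop_alpha_zeta)
  qed (auto intro: Tweight_Cons_tl Tweight_drop2 simp: Tpaths_def)
qed

end
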